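(* There exists a one-input one-output AND-OR net that does not belong to $\mathbf S(\mathbf{11tAND}\cup\mathbf{11pOR})$.
   Context: Petri nets: $(P,T,F)$ with finite disjoint places $P$, transitions $T$, flow edges $F\subseteq(P\times T)\cup(T\times P)$; $\bullet x=\{y\mid(y,x)\in F\}$, $x\bullet=\{y\mid(x,y)\in F\}$. Workflow nets. A pWF net is $(P,T,F,I,O)$ with $(P,T,F)$ a Petri net, $I,O\subseteq P$ non-empty, every node reachable by a directed path from some node of $I$, and some node of $O$ reachable from every node. A tWF net is the same with $I,O$ non-empty subsets of $T$. Input nodes may have incoming edges and output nodes outgoing edges. A WF net is a pWF or tWF net; it is one-input (one-output) if $|I|=1$ ($|O|=1$). Substitution. Let $N=(P,T,F,I,O)$ and $M=(P',T',F',I',O')$ be WF nets with disjoint node sets. If $p\in P$ and $M$ is a pWF net, $N\otimes_p M$ is obtained from $N$ by deleting $p$ and all edges incident to $p$, adding all nodes and edges of $M$, adding an edge $(t,p')$ for each $t\in\bullet_N p$ and each $p'\in I'$, and an edge $(p',t)$ for each $p'\in O'$ and each $t\in p\bullet_N$; its input set is $(I\setminus\{p\})\cup I'$ if $p\in I$ and $I$ otherwise, and its output set is $(O\setminus\{p\})\cup O'$ if $p\in O$ and $O$ otherwise. If $t\in T$ and $M$ is a tWF net, $N\otimes_t M$ is defined analogously: delete $t$ and its edges, add $M$, add $(q,t')$ for each $q\in\bullet_N t$, $t'\in I'$, and $(t',q)$ for each $t'\in O'$, $q\in t\bullet_N$, with input/output sets updated in the same way. The substitution closure $\mathbf S(C)$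 of a class $C$ of WF nets is the smallest superclass of $C$ such that whenever $N,M\in\mathbf S(C)$ are disjoint, $N\otimes_p M\in\mathbf S(C)$ for every place $p$ of $N$ if $M$ is a pWF net, and $N\otimes_t M\in\mathbf S(C)$ for every transition $t$ of $N$ if $M$ is a tWF net. AND and OR nets. An AND net is an acyclic WF net $(P,T,F,I,O)$ such that for every place $p$: (1) either $p\in I$ and $|\bullet p|=0$, or $p\notin I$ and $|\bullet p|=1$; and (2) either $p\in O$ and $|p\bullet|=0$, or $p\notin O$ and $|p\bullet|=1$. An OR net is a (possibly cyclic) WF net such that for every transition $t$: (1) either $t\in I$ and $|\bullet t|=0$, or $t\notin I$ and $|\bullet t|=1$; and (2) either $t\in O$ and $|t\bullet|=0$, or $t\notin O$ and $|t\bullet|=1$. A pAND (tAND, pOR, tOR) net is an AND (AND, OR, OR) net that is a pWF (tWF, pWF, tWF) net. $\mathbf{pAND}$ is the class of pAND nets, $\mathbf{11tAND}$ the class of one-input one-output tAND nets, $\mathbf{11pOR}$ the class of one-input one-output pOR nets, and $\mathbf{tOR}$ the class of tOR nets. The class of AND-OR nets is $\mathbf S(\mathbf{pAND}\cup\mathbf{11tAND}\cup\mathbf{11pOR}\cup\mathbf{tOR})$. *)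

theory Defs
  imports Main
begin

record 'n wfnet =
  pl   :: "'n set"
  tr   :: "'n set"
  fl   :: "('n \<times> 'n) set"
  inp  :: "'n set"
  outp :: "'n set"

definition nodes :: "'n wfnet \<Rightarrow> 'n set" where
  "nodes N = pl N \<union> tr N"

definition pre :: "'n wfnet \<Rightarrow> 'n \<Rightarrow> 'n set" where
  "pre N x = {y. (y, x) \<in> fl N}"

definition post :: "'n wfnet \<Rightarrow> 'n \<Rightarrow> 'n set" where
  "post N x = {y. (x, y) \<in> fl N}"

definition petri_net :: "'n wfnet \<Rightarrow> bool" where
  "petri_net N \<longleftrightarrow> finite (pl N) \<and> finite (tr N) \<and> pl N \<inter> tr N = {} \<and>
     fl N \<subseteq> (pl N \<times> tr N) \<union> (tr N \<times> pl N)"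

definition wf_conn :: "'n wfnet \<Rightarrow> bool" where
  "wf_conn N \<longleftrightarrow> (\<forall>x \<in> nodes N. \<exists>i \<in> inp N. (i, x) \<in> (fl N)\<^sup>*) \<and>
                  (\<forall>x \<in> nodes N. \<exists>q \<in> outp N. (x, q) \<in> (fl N)\<^sup>*)"

definition pWF :: "'n wfnet \<Rightarrow> bool" where
  "pWF N \<longleftrightarrow> petri_net N \<and> inp N \<subseteq> pl N \<and> outp N \<subseteq> pl N \<and>
     inp N \<noteq> {} \<and> outp N \<noteq> {} \<and> wf_conn N"

definition tWF :: "'n wfnet \<Rightarrow> bool" where
  "tWF N \<longleftrightarrow> petri_net N \<and> inp N \<subseteq> tr N \<and> outp N \<subseteq> tr N \<and>
     inp N \<noteq> {} \<and> outp N \<noteq> {} \<and> wf_conn N"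

definition WF :: "'n wfnet \<Rightarrow> bool" where
  "WF N \<longleftrightarrow> pWF N \<or> tWF N"

text \<open>Substitution of node x of N by net M (x a place and M a pWF net, or x a transition
  and M a tWF net). Since x is removed from both node sets, one definition covers both cases.\<close>
definition subst :: "'n wfnet \<Rightarrow> 'n \<Rightarrow> 'n wfnet \<Rightarrow> 'n wfnet" where
  "subst N x M = \<lparr>
     pl = (pl N - {x}) \<union> pl M,
     tr = (tr N - {x}) \<union> tr M,
     fl = {e \<in> fl N. fst e \<noteq> x \<and> snd e \<noteq> x} \<union> fl M
          \<union> {(y, z). y \<in> pre N x \<and> z \<in> inp M}
          \<union> {(z, y). z \<in> outp M \<and> y \<in> post N x},
     inp = (if x \<in> inp N then (inp N - {x}) \<union> inp M else inp N),
     outp = (if x \<in> outp N then (outp N - {x}) \<union> outp M else outp N) \<rparr>"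

inductive_set Scl :: "'n wfnet set \<Rightarrow> 'n wfnet set" for C :: "'n wfnet set" where
  base: "N \<in> C \<Longrightarrow> N \<in> Scl C"
| place: "\<lbrakk>N \<in> Scl C; M \<in> Scl C; nodes N \<inter> nodes M = {}; p \<in> pl N; pWF M\<rbrakk>
           \<Longrightarrow> subst N p M \<in> Scl C"
| trans: "\<lbrakk>N \<in> Scl C; M \<in> Scl C; nodes N \<inter> nodes M = {}; t \<in> tr N; tWF M\<rbrakk>
           \<Longrightarrow> subst N t M \<in> Scl C"

definition AND_net :: "'n wfnet \<Rightarrow> bool" where
  "AND_net N \<longleftrightarrow> WF N \<and> acyclic (fl N) \<and>
     (\<forall>p \<in> pl N. ((p \<in> inp N \<and> card (pre N p) = 0) \<or> (p \<notin> inp N \<and> card (pre N p) = 1)) \<and>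
                 ((p \<in> outp N \<and> card (post N p) = 0) \<or> (p \<notin> outp N \<and> card (post N p) = 1)))"

definition OR_net :: "'n wfnet \<Rightarrow> bool" where
  "OR_net N \<longleftrightarrow> WF N \<and>
     (\<forall>t \<in> tr N. ((t \<in> inp N \<and> card (pre N t) = 0) \<or> (t \<notin> inp N \<and> card (pre N t) = 1)) \<and>
                 ((t \<in> outp N \<and> card (post N t) = 0) \<or> (t \<notin> outp N \<and> card (post N t) = 1)))"

definition pAND :: "'n wfnet set" where
  "pAND = {N. AND_net N \<and> pWF N}"

definition tAND11 :: "'n wfnet set" where
  "tAND11 = {N. AND_net N \<and> tWF N \<and> card (inp N) = 1 \<and> card (outp N) = 1}"

definition pOR11 :: "'n wfnet set" where
  "pOR11 = {N. OR_net N \<and> pWF N \<and> card (inp N) = 1 \<and> card (outp N) = 1}"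

definition tOR :: "'n wfnet set" where
  "tOR = {N. OR_net N \<and> tWF N}"

definition AND_OR_nets :: "'n wfnet set" where
  "AND_OR_nets = Scl (pAND \<union> tAND11 \<union> pOR11 \<union> tOR)"

end

theory Submission
  imports Defs
begin

text \<open>
  We exhibit a one-input one-output AND-OR net: the output place of a free choice
  (a place with two alternative transitions into a second place, a pOR net) is refined by a
  join (two input places synchronised by one transition, a pAND net). In the result both
  alternative transitions feed both input places of the join.

  To see that this net is not in the substitution closure of 11tAND and 11pOR nets, we
  isolate an invariant, well-branchedness, enjoyed by all nets of that closure: the net has
  a single input from which everything is reachable and a single output; input (output)
  transitions have no pre- (post-)set; transitions feeding the input have it as their only
  output; and a transition with at least two outputs owns them, i.e. every other transition
  feeding one of its output places q is reachable from q. The invariant holds for the base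
  nets and is preserved by substituting a well-branched net for a node (locale node_subst),
  so it holds on the whole closure by rule induction. The witness violates the last clause.
\<close>

lemma flow_endpoints:
  assumes "petri_net N" and "(a, b) \<in> fl N"
  shows "(a \<in> pl N \<and> a \<notin> tr N \<and> b \<in> tr N \<and> b \<notin> pl N) \<or>
         (a \<in> tr N \<and> a \<notin> pl N \<and> b \<in> pl N \<and> b \<notin> tr N)"
  using assms unfolding petri_net_def by blast

lemma flow_nodes:
  assumes "petri_net N" and "(a, b) \<in> fl N"
  shows "a \<in> nodes N \<and> b \<in> nodes N \<and> a \<noteq> b"
  using assms by (auto simp: petri_net_def nodes_def)

definition rooted :: "'n wfnet \<Rightarrow> bool" where
  "rooted N \<longleftrightarrow> (\<exists>i e. inp N = {i} \<and> outp N = {e} \<and> i \<in> nodes N \<and> e \<in> nodes N \<and>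
                      (\<forall>y \<in> nodes N. (i, y) \<in> (fl N)\<^sup>*))"

definition terminal_io :: "'n wfnet \<Rightarrow> bool" where
  "terminal_io N \<longleftrightarrow> (\<forall>t \<in> inp N \<inter> tr N. pre N t = {}) \<and> (\<forall>t \<in> outp N \<inter> tr N. post N t = {})"

definition input_feeders :: "'n wfnet \<Rightarrow> bool" where
  "input_feeders N \<longleftrightarrow> (\<forall>y \<in> inp N. \<forall>t \<in> pre N y. post N t = {y})"

definition branch_closed :: "'n wfnet \<Rightarrow> bool" where
  "branch_closed N \<longleftrightarrow> (\<forall>t \<in> tr N. 2 \<le> card (post N t) \<longrightarrow>
     (\<forall>q \<in> post N t. \<forall>s \<in> pre N q. s = t \<or> (q, s) \<in> (fl N)\<^sup>*))"

definition well_branched :: "'n wfnet \<Rightarrow> bool" where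
  "well_branched N \<longleftrightarrow> petri_net N \<and> rooted N \<and> terminal_io N \<and> input_feeders N \<and> branch_closed N"

locale node_subst =
  fixes N M :: "'n wfnet" and x i e :: 'n
  assumes petri_N: "petri_net N" and petri_M: "petri_net M"
    and disjoint: "nodes N \<inter> nodes M = {}"
    and kind: "(x \<in> pl N \<and> i \<in> pl M \<and> e \<in> pl M) \<or> (x \<in> tr N \<and> i \<in> tr M \<and> e \<in> tr M)"
    and inp_M: "inp M = {i}" and outp_M: "outp M = {e}"
    and rooted_M: "\<forall>y \<in> nodes M. (i, y) \<in> (fl M)\<^sup>*"
begin

abbreviation W where "W \<equiv> subst N x M"

lemma x_in_N: "x \<in> nodes N" and i_in_M: "i \<in> nodes M" and e_in_M: "e \<in> nodes M"
  using kind by (auto simp: nodes_def)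

lemma fl_W: "(a, b) \<in> fl W \<longleftrightarrow> ((a, b) \<in> fl N \<and> a \<noteq> x \<and> b \<noteq> x) \<or> (a, b) \<in> fl M \<or>
    ((a, x) \<in> fl N \<and> b = i) \<or> (a = e \<and> (x, b) \<in> fl N)"
  by (auto simp: subst_def pre_def post_def inp_M outp_M)

lemma nodes_W: "nodes W = (nodes N - {x}) \<union> nodes M"
  using x_in_N disjoint by (auto simp: subst_def nodes_def)

lemma tr_W: "tr W = (tr N - {x}) \<union> tr M"
  by (simp add: subst_def)

lemma post_W_N:
  assumes "y \<in> nodes N" "y \<noteq> x"
  shows "post W y = (\<lambda>z. if z = x then i else z) ` post N y"
  using assms disjoint flow_nodes[OF petri_M, of y] i_in_M e_in_M
  by (auto simp: post_def fl_W image_iff)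

lemma pre_W_N:
  assumes "y \<in> nodes N" "y \<noteq> x"
  shows "pre W y = (\<lambda>z. if z = x then e else z) ` pre N y"
  using assms disjoint flow_nodes[OF petri_M, of _ y] i_in_M e_in_M
  by (auto simp: pre_def fl_W image_iff)

lemma post_W_M:
  assumes "y \<in> nodes M"
  shows "post W y = post M y \<union> (if y = e then post N x else {})"
  using assms disjoint flow_nodes[OF petri_N, of y]
  by (auto simp: post_def fl_W)

lemma pre_W_M:
  assumes "y \<in> nodes M"
  shows "pre W y = pre M y \<union> (if y = i then pre N x else {})"
  using assms disjoint flow_nodes[OF petri_N, of _ y]
  by (auto simp: pre_def fl_W)

lemma fl_M_W: "(a, b) \<in> (fl M)\<^sup>* \<Longrightarrow> (a, b) \<in> (fl W)\<^sup>*"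
  using rtrancl_mono[of "fl M" "fl W"] by (auto simp: subst_def)

lemma i_to_e_W: "(i, e) \<in> (fl W)\<^sup>*"
  using fl_M_W rooted_M e_in_M by simp

text \<open>Every path of N lifts to W, a visit of x becoming the passage from i to e through M.
  The two versions differ in whether a final x is replaced by the entry i or the exit e.\<close>
lemma lift_path:
  assumes "(u, v) \<in> (fl N)\<^sup>*"
  shows "((if u = x then i else u), (if v = x then i else v)) \<in> (fl W)\<^sup>*"
  using assms
proof (induction rule: rtrancl_induct)
  case base
  show ?case by simp
next
  case (step v w)
  have "((if u = x then i else u), (if v = x then e else v)) \<in> (fl W)\<^sup>*"
    using step.IH i_to_e_W by (cases "v = x") auto
  moreover have "((if v = x then e else v), (if w = x then i else w)) \<in> fl W"
    using step.hyps(2) flow_nodes[OF petri_N step.hyps(2)] unfolding fl_W by auto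
  ultimately show ?case by (rule rtrancl_into_rtrancl)
qed

lemma lift_path_out:
  assumes "(u, v) \<in> (fl N)\<^sup>*"
  shows "((if u = x then i else u), (if v = x then e else v)) \<in> (fl W)\<^sup>*"
  using lift_path[OF assms] i_to_e_W by (cases "v = x") auto

lemma petri_W: "petri_net W"
proof -
  have "(a, b) \<in> (pl W \<times> tr W) \<union> (tr W \<times> pl W)" if ab: "(a, b) \<in> fl W" for a b
  proof -
    consider "(a, b) \<in> fl N" "a \<noteq> x" "b \<noteq> x" | "(a, b) \<in> fl M" | "(a, x) \<in> fl N" "b = i"
      | "a = e" "(x, b) \<in> fl N"
      using ab unfolding fl_W by blast
    then show ?thesis
      using kind flow_endpoints[OF petri_N, of a b] flow_endpoints[OF petri_M, of a b]
        flow_endpoints[OF petri_N, of a x] flow_endpoints[OF petri_N, of x b]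
        flow_nodes[OF petri_N, of a x] flow_nodes[OF petri_N, of x b]
      by cases (auto simp: subst_def)
  qed
  moreover have "pl W \<inter> tr W = {}" "finite (pl W)" "finite (tr W)"
    using petri_N petri_M disjoint by (auto simp: subst_def petri_net_def nodes_def)
  ultimately show ?thesis by (auto simp: petri_net_def)
qed

lemma rooted_W:
  assumes "rooted N"
  shows "rooted W"
proof -
  obtain iN eN where N: "inp N = {iN}" "outp N = {eN}" "iN \<in> nodes N" "eN \<in> nodes N"
    and reach: "\<forall>y \<in> nodes N. (iN, y) \<in> (fl N)\<^sup>*"
    using assms unfolding rooted_def by blast
  define iW where "iW = (if iN = x then i else iN)"
  have to_i: "(iW, i) \<in> (fl W)\<^sup>*"
    using lift_path[of iN x] reach x_in_N unfolding iW_def by auto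
  have "(iW, y) \<in> (fl W)\<^sup>*" if "y \<in> nodes W" for y
  proof (cases "y \<in> nodes M")
    case True
    then show ?thesis using to_i fl_M_W rooted_M by (meson rtrancl_trans)
  next
    case False
    then show ?thesis using that lift_path[of iN y] reach by (auto simp: nodes_W iW_def)
  qed
  moreover have "inp W = {iW}" "outp W = {if eN = x then e else eN}"
    using N by (auto simp: subst_def iW_def inp_M outp_M)
  ultimately show ?thesis
    unfolding rooted_def using N i_in_M e_in_M by (auto simp: nodes_W iW_def)
qed

text \<open>When x is a transition, so are i and e, hence a source and a sink of M if M satisfies
  terminal_io; in any case e never feeds i directly.\<close>
lemma boundary_M:
  assumes "terminal_io M" and "x \<in> tr N"
  shows "pre M i = {}" and "post M e = {}"
  using assms kind petri_N petri_M inp_M outp_M by (auto simp: terminal_io_def petri_net_def)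

lemma e_not_pre_i:
  assumes "terminal_io M"
  shows "e \<notin> pre M i"
proof
  assume "e \<in> pre M i"
  then have "(e, i) \<in> fl M" by (simp add: pre_def)
  then show False
    using kind boundary_M[OF assms] flow_endpoints[OF petri_M, of e i] by (auto simp: pre_def)
qed

lemma tr_W_cases:
  assumes "t \<in> tr W"
  obtains "t \<in> tr N" "t \<in> nodes N" "t \<noteq> x" "t \<notin> nodes M" | "t \<in> tr M" "t \<in> nodes M" "t \<notin> nodes N"
  using assms disjoint by (auto simp: tr_W nodes_def)

lemma terminal_io_W:
  assumes "rooted N" "terminal_io N" "terminal_io M"
  shows "terminal_io W"
proof -
  have io_N: "inp N \<subseteq> nodes N" "outp N \<subseteq> nodes N"
    using assms(1) by (auto simp: rooted_def)
  have "pre W t = {}" if t: "t \<in> inp W" "t \<in> tr W" for t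
    using t(2)
  proof (cases rule: tr_W_cases)
    case 1
    then have "t \<in> inp N" using t(1) io_N disjoint inp_M i_in_M by (auto simp: subst_def split: if_splits)
    then show ?thesis using 1 assms(2) pre_W_N by (auto simp: terminal_io_def)
  next
    case 2
    then have "t = i" "x \<in> inp N" using t(1) io_N inp_M by (auto simp: subst_def split: if_splits)
    moreover have "x \<in> tr N" using kind 2 \<open>t = i\<close> petri_M by (auto simp: petri_net_def)
    ultimately show ?thesis
      using assms(2) boundary_M[OF assms(3)] pre_W_M[OF i_in_M] by (auto simp: terminal_io_def)
  qed
  moreover have "post W t = {}" if t: "t \<in> outp W" "t \<in> tr W" for t
    using t(2)
  proof (cases rule: tr_W_cases)
    case 1
    then have "t \<in> outp N" using t(1) io_N disjoint outp_M e_in_M by (auto simp: subst_def split: if_splits)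
    then show ?thesis using 1 assms(2) post_W_N by (auto simp: terminal_io_def)
  next
    case 2
    then have "t = e" "x \<in> outp N" using t(1) io_N outp_M by (auto simp: subst_def split: if_splits)
    moreover have "x \<in> tr N" using kind 2 \<open>t = e\<close> petri_M by (auto simp: petri_net_def)
    ultimately show ?thesis
      using assms(2) boundary_M[OF assms(3)] post_W_M[OF e_in_M] by (auto simp: terminal_io_def)
  qed
  ultimately show ?thesis by (auto simp: terminal_io_def)
qed

text \<open>The feeders of the new input are old feeders of x (whose single output x becomes i), feeders
  of i inside M, or, when x is a transition feeding the input of N, the sink e of M.\<close>
lemma input_feeders_W:
  assumes "rooted N" "terminal_io N" "input_feeders N" "terminal_io M" "input_feeders M"
  shows "input_feeders W"
proof -
  obtain iN where iN: "inp N = {iN}" "iN \<in> nodes N"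
    using assms(1) by (auto simp: rooted_def)
  have "post W t = {y}" if y: "y \<in> inp W" and t: "t \<in> pre W y" for y t
  proof (cases "iN = x")
    case True
    then have "y = i" using y iN inp_M by (auto simp: subst_def)
    then have "t \<in> pre M i \<or> t \<in> pre N x" using t pre_W_M[OF i_in_M] by auto
    then show ?thesis
    proof
      assume t_M: "t \<in> pre M i"
      then have "t \<in> nodes M" "t \<noteq> e"
        using flow_nodes[OF petri_M] e_not_pre_i[OF assms(4)] by (auto simp: pre_def)
      then show ?thesis using post_W_M t_M assms(5) inp_M \<open>y = i\<close> by (auto simp: input_feeders_def)
    next
      assume t_N: "t \<in> pre N x"
      then have "post N t = {x}" using assms(3) iN True by (auto simp: input_feeders_def)
      moreover have "t \<in> nodes N" "t \<noteq> x" using t_N flow_nodes[OF petri_N] by (auto simp: pre_def)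
      ultimately have "post W t = {i}" using post_W_N by auto
      then show ?thesis using \<open>y = i\<close> by simp
    qed
  next
    case iN_not_x: False
    then have "y = iN" using y iN by (auto simp: subst_def)
    then obtain s where s: "s \<in> pre N iN" "t = (if s = x then e else s)"
      using t pre_W_N iN iN_not_x by auto
    have post_s: "post N s = {iN}" using assms(3) iN s(1) by (auto simp: input_feeders_def)
    show ?thesis
    proof (cases "s = x")
      case True
      have "iN \<notin> tr N" using assms(2) iN s(1) by (auto simp: terminal_io_def)
      then have "x \<in> tr N" using s(1) True flow_endpoints[OF petri_N, of x iN] by (auto simp: pre_def)
      then show ?thesis
        using post_W_M[OF e_in_M] boundary_M[OF assms(4)] post_s s(2) True \<open>y = iN\<close> by auto
    next
      case False
      then show ?thesis
        using post_W_N[of s] flow_nodes[OF petri_N, of s iN] post_s s \<open>y = iN\<close> iN_not_x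
        by (auto simp: pre_def)
    qed
  qed
  then show ?thesis by (auto simp: input_feeders_def)
qed

text \<open>A branching transition of N keeps owning its output places in W; for the output x this
  is because M is entered only through i and every node of M is reachable from i.\<close>
lemma branch_closed_W_N:
  assumes "branch_closed N" and t: "t \<in> tr N" "t \<noteq> x" and branching: "2 \<le> card (post W t)"
    and q: "q \<in> post W t" and s: "s \<in> pre W q"
  shows "s = t \<or> (q, s) \<in> (fl W)\<^sup>*"
proof -
  have t_N: "t \<in> nodes N" using t by (simp add: nodes_def)
  have post_t: "post W t = (\<lambda>z. if z = x then i else z) ` post N t"
    using post_W_N[OF t_N t(2)] .
  have "post N t \<subseteq> nodes N" "finite (nodes N)"
    using petri_N flow_nodes[OF petri_N, of t] by (auto simp: petri_net_def nodes_def post_def)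
  then have "finite (post N t)" by (rule finite_subset)
  then have "2 \<le> card (post N t)"
    using branching post_t card_image_le le_trans by metis
  then have own: "\<forall>q' \<in> post N t. \<forall>s' \<in> pre N q'. s' = t \<or> (q', s') \<in> (fl N)\<^sup>*"
    using assms(1) t(1) by (auto simp: branch_closed_def)
  obtain q' where q': "q' \<in> post N t" "q = (if q' = x then i else q')"
    using q post_t by auto
  show ?thesis
  proof (cases "q' = x")
    case False
    then have q_N: "q \<in> nodes N" "q \<noteq> x"
      using q' flow_nodes[OF petri_N, of t q'] by (auto simp: post_def)
    then obtain s' where s': "s' \<in> pre N q" "s = (if s' = x then e else s')"
      using s pre_W_N by auto
    then have "s' = t \<or> (q, s') \<in> (fl N)\<^sup>*" using own q' False by auto
    then show ?thesis using lift_path_out[of q s'] q_N s' t(2) by auto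
  next
    case True
    then have "q = i" using q' by simp
    then have "s \<in> pre M i \<or> s \<in> pre N x" using s pre_W_M[OF i_in_M] by auto
    then show ?thesis
    proof
      assume "s \<in> pre M i"
      then show ?thesis
        using \<open>q = i\<close> rooted_M fl_M_W flow_nodes[OF petri_M, of s i] by (auto simp: pre_def)
    next
      assume s_N: "s \<in> pre N x"
      then have "s = t \<or> (x, s) \<in> (fl N)\<^sup>*" using own q' True by auto
      then show ?thesis
        using lift_path[of x s] \<open>q = i\<close> flow_nodes[OF petri_N, of s x] s_N by (auto simp: pre_def)
    qed
  qed
qed

text \<open>The only new arcs
  leaving M start in e, which (when it is a transition) inherits the outputs of x; the only
  new arcs entering M end in i, whose feeders inside M are non-branching.\<close>
lemma branch_closed_W_M:
  assumes "branch_closed N" "branch_closed M" "terminal_io M" "input_feeders M"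
    and t: "t \<in> tr M" and branching: "2 \<le> card (post W t)"
    and q: "q \<in> post W t" and s: "s \<in> pre W q"
  shows "s = t \<or> (q, s) \<in> (fl W)\<^sup>*"
proof (cases "t = e")
  case True
  then have x_tr: "x \<in> tr N" using kind t petri_M by (auto simp: petri_net_def)
  then have post_t: "post W t = post N x"
    using post_W_M[OF e_in_M] boundary_M[OF assms(3)] True by simp
  then have q_N: "q \<in> post N x" "q \<in> nodes N" "q \<noteq> x"
    using q flow_nodes[OF petri_N, of x q] by (auto simp: post_def)
  then obtain s' where s': "s' \<in> pre N q" "s = (if s' = x then e else s')"
    using s pre_W_N by auto
  have "s' = x \<or> (q, s') \<in> (fl N)\<^sup>*"
    using assms(1) x_tr q_N(1) s'(1) branching post_t by (auto simp: branch_closed_def)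
  then show ?thesis using lift_path_out[of q s'] q_N s' True by auto
next
  case False
  have t_M: "t \<in> nodes M" using t by (simp add: nodes_def)
  then have post_t: "post W t = post M t" using post_W_M False by simp
  then have q_M: "q \<in> post M t" "q \<in> nodes M"
    using q flow_nodes[OF petri_M, of t q] by (auto simp: post_def)
  then have "s \<in> pre M q \<or> (q = i \<and> s \<in> pre N x)"
    using s pre_W_M by (auto split: if_splits)
  then show ?thesis
  proof
    assume "s \<in> pre M q"
    then have "s = t \<or> (q, s) \<in> (fl M)\<^sup>*"
      using assms(2) t q_M branching post_t by (auto simp: branch_closed_def)
    then show ?thesis using fl_M_W by blast
  next
    assume "q = i \<and> s \<in> pre N x"
    then have "post M t = {i}"
      using assms(4) q_M inp_M by (auto simp: input_feeders_def pre_def post_def)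
    then show ?thesis using branching post_t by simp
  qed
qed

lemma branch_closed_W:
  assumes "branch_closed N" "branch_closed M" "terminal_io M" "input_feeders M"
  shows "branch_closed W"
  unfolding branch_closed_def
proof (intro ballI impI)
  fix t q s
  assume "t \<in> tr W" "2 \<le> card (post W t)" "q \<in> post W t" "s \<in> pre W q"
  then show "s = t \<or> (q, s) \<in> (fl W)\<^sup>*"
    using branch_closed_W_N[OF assms(1)] branch_closed_W_M[OF assms]
    by (cases rule: tr_W_cases) auto
qed

lemma well_branched_W:
  assumes "well_branched N" "well_branched M"
  shows "well_branched W"
  using assms petri_W rooted_W terminal_io_W input_feeders_W branch_closed_W
  by (simp add: well_branched_def)

end


lemma card_one_member: "card A = 1 \<Longrightarrow> a \<in> A \<Longrightarrow> A = {a}"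
  by (metis card_1_singletonE singletonD)

lemma WF_one_io_rooted:
  assumes "WF N" "card (inp N) = 1" "card (outp N) = 1"
  shows "rooted N"
proof -
  obtain i e where io: "inp N = {i}" "outp N = {e}"
    using assms(2,3) card_1_singletonE by metis
  have "inp N \<subseteq> nodes N" "outp N \<subseteq> nodes N" "wf_conn N"
    using assms(1) by (auto simp: WF_def pWF_def tWF_def nodes_def)
  then show ?thesis using io by (auto simp: rooted_def wf_conn_def)
qed

lemma acyclic_terminal_io:
  assumes "petri_net N" "rooted N" "wf_conn N" "acyclic (fl N)"
  shows "terminal_io N"
proof -
  obtain i e where io: "inp N = {i}" "outp N = {e}"
    and from_i: "\<forall>y \<in> nodes N. (i, y) \<in> (fl N)\<^sup>*"
    using assms(2) by (auto simp: rooted_def)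
  have to_e: "\<forall>y \<in> nodes N. (y, e) \<in> (fl N)\<^sup>*"
    using assms(3) io by (auto simp: wf_conn_def)
  have "pre N i = {}"
  proof (rule equals0I)
    fix r assume "r \<in> pre N i"
    then have "(i, r) \<in> (fl N)\<^sup>*" "(r, i) \<in> fl N"
      using from_i flow_nodes[OF assms(1), of r i] by (auto simp: pre_def)
    then have "(i, i) \<in> (fl N)\<^sup>+" by (rule rtrancl_into_trancl1)
    then show False using assms(4) by (simp add: acyclic_def)
  qed
  moreover have "post N e = {}"
  proof (rule equals0I)
    fix r assume "r \<in> post N e"
    then have "(e, r) \<in> fl N" "(r, e) \<in> (fl N)\<^sup>*"
      using to_e flow_nodes[OF assms(1), of e r] by (auto simp: post_def)
    then have "(e, e) \<in> (fl N)\<^sup>+" by (rule rtrancl_into_trancl2)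
    then show False using assms(4) by (simp add: acyclic_def)
  qed
  ultimately show ?thesis using io by (auto simp: terminal_io_def)
qed

text \<open>In a tAND net every output place of a transition has it as its unique predecessor.\<close>
lemma tAND11_well_branched:
  assumes "N \<in> tAND11"
  shows "well_branched N"
proof -
  have AND: "AND_net N" and tWF: "tWF N" and one_io: "card (inp N) = 1" "card (outp N) = 1"
    using assms by (auto simp: tAND11_def)
  have petri: "petri_net N" and io_tr: "inp N \<subseteq> tr N" and conn: "wf_conn N"
    using tWF by (auto simp: tWF_def)
  have rooted: "rooted N"
    using WF_one_io_rooted[of N] tWF one_io by (simp add: WF_def)
  have "acyclic (fl N)" using AND by (simp add: AND_net_def)
  then have terminal: "terminal_io N" using acyclic_terminal_io petri rooted conn by blast
  then have "input_feeders N"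
    using io_tr by (auto simp: terminal_io_def input_feeders_def)
  moreover have "branch_closed N"
    unfolding branch_closed_def
  proof (intro ballI impI)
    fix t q s assume "t \<in> tr N" "q \<in> post N t" "s \<in> pre N q"
    then have "q \<in> pl N" "q \<notin> inp N" "t \<in> pre N q"
      using flow_endpoints[OF petri, of t q] io_tr by (auto simp: post_def pre_def)
    then have "card (pre N q) = 1"
      using AND \<open>q \<in> pl N\<close> \<open>q \<notin> inp N\<close> unfolding AND_net_def by blast
    then have "pre N q = {t}" using \<open>t \<in> pre N q\<close> by (rule card_one_member)
    then show "s = t \<or> (q, s) \<in> (fl N)\<^sup>*" using \<open>s \<in> pre N q\<close> by simp
  qed
  ultimately show ?thesis using petri rooted terminal by (simp add: well_branched_def)
qed

text \<open>In a pOR net with place boundary every transition has exactly one output.\<close>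
lemma pOR11_well_branched:
  assumes "N \<in> pOR11"
  shows "well_branched N"
proof -
  have OR: "OR_net N" and pWF: "pWF N" and one_io: "card (inp N) = 1" "card (outp N) = 1"
    using assms by (auto simp: pOR11_def)
  have petri: "petri_net N" and io_pl: "inp N \<subseteq> pl N" "outp N \<subseteq> pl N"
    using pWF by (auto simp: pWF_def)
  then have io_not_tr: "inp N \<inter> tr N = {}" "outp N \<inter> tr N = {}"
    by (auto simp: petri_net_def)
  have rooted: "rooted N"
    using WF_one_io_rooted[of N] pWF one_io by (simp add: WF_def)
  have single_output: "card (post N t) = 1" if "t \<in> tr N" for t
    using OR that io_not_tr unfolding OR_net_def by blast
  have "input_feeders N"
    unfolding input_feeders_def
  proof (intro ballI)
    fix y t assume "y \<in> inp N" "t \<in> pre N y"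
    then have "t \<in> tr N" "y \<in> post N t"
      using flow_endpoints[OF petri, of t y] io_pl by (auto simp: pre_def post_def)
    then show "post N t = {y}" using single_output by (simp add: card_one_member)
  qed
  moreover have "branch_closed N"
    using single_output by (auto simp: branch_closed_def)
  moreover have "terminal_io N"
    using io_not_tr by (auto simp: terminal_io_def)
  ultimately show ?thesis using petri rooted by (simp add: well_branched_def)
qed

lemma Scl_well_branched:
  assumes "N \<in> Scl (tAND11 \<union> pOR11)"
  shows "well_branched N"
  using assms
proof (induction rule: Scl.induct)
  case (base N)
  then show ?case using tAND11_well_branched pOR11_well_branched by blast
next
  case (place N M p)
  obtain i e where io: "inp M = {i}" "outp M = {e}" "\<forall>y \<in> nodes M. (i, y) \<in> (fl M)\<^sup>*"
    using \<open>well_branched M\<close> by (auto simp: well_branched_def rooted_def)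
  moreover have "i \<in> pl M" "e \<in> pl M" using \<open>pWF M\<close> io by (auto simp: pWF_def)
  ultimately interpret node_subst N M p i e
    using place.hyps place.IH by unfold_locales (auto simp: well_branched_def)
  show ?case using well_branched_W place.IH .
next
  case (trans N M t)
  obtain i e where io: "inp M = {i}" "outp M = {e}" "\<forall>y \<in> nodes M. (i, y) \<in> (fl M)\<^sup>*"
    using \<open>well_branched M\<close> by (auto simp: well_branched_def rooted_def)
  moreover have "i \<in> tr M" "e \<in> tr M" using \<open>tWF M\<close> io by (auto simp: tWF_def)
  ultimately interpret node_subst N M t i e
    using trans.hyps trans.IH by unfold_locales (auto simp: well_branched_def)
  show ?case using well_branched_W trans.IH .
qed

definition choice_net :: "nat wfnet" where
  "choice_net = \<lparr>pl = {0, 1}, tr = {2, 3}, fl = {(0, 2), (0, 3), (2, 1), (3, 1)},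
                 inp = {0}, outp = {1}\<rparr>"

definition join_net :: "nat wfnet" where
  "join_net = \<lparr>pl = {4, 5, 7}, tr = {6}, fl = {(4, 6), (5, 6), (6, 7)}, inp = {4, 5}, outp = {7}\<rparr>"

lemma choice_net_pWF: "pWF choice_net"
  unfolding pWF_def petri_net_def wf_conn_def nodes_def
  by (auto simp: choice_net_def intro: converse_rtrancl_into_rtrancl)

lemma join_net_pWF: "pWF join_net"
  unfolding pWF_def petri_net_def wf_conn_def nodes_def
  by (auto simp: join_net_def intro: converse_rtrancl_into_rtrancl)

lemma choice_net_pOR11: "choice_net \<in> pOR11"
proof -
  have "pre choice_net 2 = {0}" "pre choice_net 3 = {0}" "post choice_net 2 = {1}" "post choice_net 3 = {1}"
    by (auto simp: pre_def post_def choice_net_def)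
  then show ?thesis
    using choice_net_pWF by (auto simp: pOR11_def OR_net_def WF_def choice_net_def)
qed

lemma join_net_pAND: "join_net \<in> pAND"
proof -
  have "pre join_net 4 = {}" "pre join_net 5 = {}" "pre join_net 7 = {6}"
    "post join_net 4 = {6}" "post join_net 5 = {6}" "post join_net 7 = {}"
    by (auto simp: pre_def post_def join_net_def)
  moreover have "acyclic (fl join_net)"
    by (rule acyclic_subset[OF wf_acyclic[OF wf_less_than]]) (auto simp: join_net_def)
  ultimately show ?thesis
    using join_net_pWF by (auto simp: pAND_def AND_net_def WF_def join_net_def)
qed

text \<open>Refining the output place of the choice by the join: both alternative transitions
  now feed both input places of the join.\<close>
definition witness :: "nat wfnet" where
  "witness = subst choice_net 1 join_net"

lemma witness_fl: "fl witness = {(0, 2), (0, 3), (4, 6), (5, 6), (6, 7), (2, 4), (2, 5), (3, 4), (3, 5)}"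
  by (auto simp: witness_def subst_def pre_def post_def choice_net_def join_net_def)

lemma witness_AND_OR: "witness \<in> AND_OR_nets"
  unfolding AND_OR_nets_def witness_def
proof (rule Scl.place)
  show "choice_net \<in> Scl (pAND \<union> tAND11 \<union> pOR11 \<union> tOR)"
    using choice_net_pOR11 by (auto intro: Scl.base)
  show "join_net \<in> Scl (pAND \<union> tAND11 \<union> pOR11 \<union> tOR)"
    using join_net_pAND by (auto intro: Scl.base)
  show "nodes choice_net \<inter> nodes join_net = {}" "1 \<in> pl choice_net"
    by (auto simp: nodes_def choice_net_def join_net_def)
qed (rule join_net_pWF)

text \<open>Transition 2 branches to places 4 and 5, but place 4 is also fed by transition 3,
  which is not reachable from 4.\<close>
lemma witness_not_well_branched: "\<not> well_branched witness"
proof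
  assume "well_branched witness"
  moreover have "2 \<in> tr witness"
    by (simp add: witness_def subst_def choice_net_def)
  moreover have "post witness 2 = {4, 5}"
    by (auto simp: post_def witness_fl)
  ultimately have "\<forall>s \<in> pre witness 4. s = 2 \<or> (4, s) \<in> (fl witness)\<^sup>*"
    unfolding well_branched_def branch_closed_def by fastforce
  moreover have "3 \<in> pre witness 4"
    by (simp add: pre_def witness_fl)
  ultimately have "(4, 3) \<in> (fl witness)\<^sup>*" by fastforce
  moreover have "(4, y) \<in> (fl witness)\<^sup>* \<Longrightarrow> y \<in> {4, 6, 7}" for y
    by (induction rule: rtrancl_induct) (auto simp: witness_fl)
  ultimately show False by fastforce
qed

theorem mainTheorem4:
  shows "\<exists>N :: nat wfnet. N \<in> AND_OR_nets \<and> card (inp N) = 1 \<and> card (outp N) = 1 \<and>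
           N \<notin> Scl (tAND11 \<union> pOR11)"
proof (intro exI conjI)
  show "witness \<in> AND_OR_nets" by (rule witness_AND_OR)
  show "card (inp witness) = 1" "card (outp witness) = 1"
    by (simp_all add: witness_def subst_def choice_net_def join_net_def)
  show "witness \<notin> Scl (tAND11 \<union> pOR11)"
    using Scl_well_branched witness_not_well_branched by blast
qed

end
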